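(* For all integers $d\ge0$, $0\le k\le d$ and $i\ge1$, $$\dot{\mathcal{F}}_{d,k,d-k}>\dot{\mathcal{F}}_{d,k+i,d-k+i}>0.$$
   Context: Let $P_k$ denote the classical Legendre polynomial of degree $k$ on $[-1,1]$, normalized so that $P_k(1)=1$ (orthogonal with respect to $\int_{-1}^1\cdot\,dt$). For integers $a,b,c\ge0$, $\dot{\mathcal{F}}_{a,b,c}:=\int_{-1}^1P_a(\tau)P_b(\tau)P_c(\tau)\,d\tau$. *)

theory Defs
  imports "HOL-Analysis.Analysis"
begin

text \<open>Classical Legendre polynomials, normalised by P_k(1) = 1, via Bonnet's recurrence
  (n+2) P_(n+2)(x) = (2n+3) x P_(n+1)(x) - (n+1) P_n(x), with P_0 = 1, P_1 = x.\<close>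
fun legendreP :: "nat \<Rightarrow> real \<Rightarrow> real" where
  "legendreP 0 x = 1"
| "legendreP (Suc 0) x = x"
| "legendreP (Suc (Suc n)) x =
     ((2 * real n + 3) * x * legendreP (Suc n) x - (real n + 1) * legendreP n x) / (real n + 2)"

definition legendre_triple :: "nat \<Rightarrow> nat \<Rightarrow> nat \<Rightarrow> real" where
  "legendre_triple a b c =
     integral {-1..1} (\<lambda>t. legendreP a t * legendreP b t * legendreP c t)"

end

theory Submission
  imports Defs
begin

text \<open>
  Adams' formula evaluates the triple integral: if \<open>a + b + c = 2s\<close> and \<open>a, b, c \<le> s\<close> then
  \<open>F(a,b,c) = 2/(2s+1) \<cdot> A(s-a) A(s-b) A(s-c) / A(s)\<close> with \<open>A(n) = (1/2)\<^sub>n / n!\<close>, and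
  \<open>F(a,b,c) = 0\<close> otherwise. Both sides satisfy the recurrence obtained by expanding
  \<open>\<integral> t P\<^sub>a P\<^sub>b P\<^sub>c\<close> once via \<open>t P\<^sub>a\<close> and once via \<open>t P\<^sub>b\<close> with the three-term recurrence,
  and a solution of it is determined by its row \<open>a = 0\<close>; there \<open>F(0,b,0) = \<integral> P\<^sub>b\<close> is \<open>2\<close>
  for \<open>b = 0\<close> and \<open>0\<close> otherwise. The two integrals of the theorem are then
  \<open>2 A(k) A(d-k) / ((2d+1) A(d))\<close> and \<open>2 A(i) A(k) A(d-k) / ((2d+2i+1) A(d+i))\<close>, so the
  inequality reduces to \<open>A(d) A(i) \<le> A(d+i)\<close>, which holds because
  \<open>A(n+1)/A(n) = (2n+1)/(2n+2)\<close> increases with \<open>n\<close>.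
\<close>

lemma legendreP_Suc_Suc:
  "(real n + 2) * legendreP (Suc (Suc n)) x
     = (2 * real n + 3) * x * legendreP (Suc n) x - (real n + 1) * legendreP n x"
  by (simp add: add_pos_pos)

lemma legendreP_1 [simp]: "legendreP n 1 = 1"
  by (induction n rule: induct_nat_012) (simp_all add: field_simps)

lemma legendreP_neg_1 [simp]: "legendreP n (-1) = (-1) ^ n"
  by (induction n rule: induct_nat_012) (simp_all add: field_simps)

lemma continuous_on_legendreP [continuous_intros]: "continuous_on S (legendreP n)"
  by (induction n rule: induct_nat_012) (auto intro!: continuous_intros)

declare legendreP.simps(3) [simp del]

lemma x_times_legendreP:
  "(2 * real n + 1) * (x * legendreP n x) = (real n + 1) * legendreP (Suc n) x + real n * legendreP (n - 1) x"
proof (cases n)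
  case (Suc m)
  then show ?thesis using legendreP_Suc_Suc[of m x] by (simp add: algebra_simps)
qed simp

fun legendreP' :: "nat \<Rightarrow> real \<Rightarrow> real" where
  "legendreP' 0 x = 0"
| "legendreP' (Suc 0) x = 1"
| "legendreP' (Suc (Suc n)) x =
     ((2 * real n + 3) * (legendreP (Suc n) x + x * legendreP' (Suc n) x) - (real n + 1) * legendreP' n x)
       / (real n + 2)"

lemma legendreP_has_real_derivative: "(legendreP n has_real_derivative legendreP' n x) (at x)"
proof (induction n rule: induct_nat_012)
  case (ge2 n)
  then have "((\<lambda>x. (2 * real n + 3) * x * legendreP (Suc n) x - (real n + 1) * legendreP n x)
      has_real_derivative (2 * real n + 3) * (legendreP (Suc n) x + x * legendreP' (Suc n) x)
        - (real n + 1) * legendreP' n x) (at x)"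
    by (auto intro!: derivative_eq_intros simp: algebra_simps)
  from DERIV_cdivide[OF this, of "real n + 2"] show ?case
    by (simp add: legendreP.simps(3)[abs_def] legendreP'.simps(3))
qed (auto intro!: derivative_eq_intros)

declare legendreP'.simps(3) [simp del]

text \<open>The second identity is only needed to carry the induction.\<close>

lemma legendreP'_recurrences:
  "legendreP' (Suc n) x - legendreP' (n - 1) x = (2 * real n + 1) * legendreP n x
   \<and> x * legendreP' (Suc n) x - legendreP' n x = (real n + 1) * legendreP (Suc n) x"
proof (induction n rule: induct_nat_012)
  case (ge2 n)
  have IH: "x * legendreP' (Suc n) x = legendreP' n x + (real n + 1) * legendreP (Suc n) x"
    "legendreP' (Suc (Suc n)) x = legendreP' n x + (2 * real n + 3) * legendreP (Suc n) x"
    "x * legendreP' (Suc (Suc n)) x = legendreP' (Suc n) x + (real n + 2) * legendreP (Suc (Suc n)) x"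
    using ge2.IH by (simp_all only: diff_Suc_1 of_nat_Suc) argo+
  have "(real n + 3) * legendreP' (Suc (Suc (Suc n))) x
      = (2 * real n + 5) * (legendreP (Suc (Suc n)) x + x * legendreP' (Suc (Suc n)) x)
        - (real n + 2) * legendreP' (Suc n) x"
    unfolding legendreP'.simps(3)[of "Suc n" x] by (simp add: add_pos_pos add_ac)
  also have "\<dots> = (real n + 3) * (legendreP' (Suc n) x + (2 * real n + 5) * legendreP (Suc (Suc n)) x)"
    unfolding IH(3) by (simp add: algebra_simps)
  finally have A: "legendreP' (Suc (Suc (Suc n))) x
      = legendreP' (Suc n) x + (2 * real n + 5) * legendreP (Suc (Suc n)) x"
    by (simp add: add_pos_pos)
  have "x * legendreP' (Suc (Suc (Suc n))) x - legendreP' (Suc (Suc n)) x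
      = (2 * real n + 5) * x * legendreP (Suc (Suc n)) x - (real n + 2) * legendreP (Suc n) x"
    unfolding A IH(2) by (simp add: algebra_simps IH(1))
  also have "\<dots> = (real n + 3) * legendreP (Suc (Suc (Suc n))) x"
    using legendreP_Suc_Suc[of "Suc n" x] by (simp add: algebra_simps)
  finally show ?case using A by (simp add: algebra_simps)
qed (simp_all add: legendreP.simps(3) legendreP'.simps(3) field_simps)

lemma integral_legendreP: "integral {-1..1} (legendreP n) = (if n = 0 then 2 else 0)"
proof (cases n)
  case (Suc m)
  define F where "F x = (legendreP (Suc (Suc m)) x - legendreP m x) / (2 * real m + 3)" for x
  have "(F has_real_derivative legendreP (Suc m) x) (at x)" for x
  proof -
    have "legendreP' (Suc (Suc m)) x - legendreP' m x = (2 * real m + 3) * legendreP (Suc m) x"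
      using legendreP'_recurrences[of "Suc m" x] by (simp add: algebra_simps)
    then show ?thesis
      unfolding F_def
      by (auto intro!: derivative_eq_intros legendreP_has_real_derivative simp: add_pos_pos)
  qed
  then have "(legendreP (Suc m) has_integral F 1 - F (-1)) {-1..1}"
    by (intro fundamental_theorem_of_calculus)
       (auto simp: has_real_derivative_iff_has_vector_derivative[symmetric] intro: has_field_derivative_at_within)
  moreover have "F 1 - F (-1) = 0"
    by (simp add: F_def)
  ultimately show ?thesis
    using Suc by (simp add: integral_unique)
next
  case 0
  have "legendreP 0 = (\<lambda>_. 1)"
    by auto
  with 0 show ?thesis
    by simp
qed

lemma legendre_triple_swap12: "legendre_triple a b c = legendre_triple b a c"
  by (simp add: legendre_triple_def ac_simps)

lemma legendre_triple_swap23: "legendre_triple a b c = legendre_triple a c b"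
  by (simp add: legendre_triple_def ac_simps)

lemma integral_x_legendre_triple:
  "integral {-1..1} (\<lambda>t. t * legendreP a t * legendreP b t * legendreP c t)
     = ((real a + 1) * legendre_triple (Suc a) b c + real a * legendre_triple (a - 1) b c)
       / (2 * real a + 1)"
proof -
  have "(2 * real a + 1) * (t * legendreP a t * legendreP b t * legendreP c t)
      = (real a + 1) * (legendreP (Suc a) t * legendreP b t * legendreP c t)
        + real a * (legendreP (a - 1) t * legendreP b t * legendreP c t)" for t
  proof -
    have "(2 * real a + 1) * (t * legendreP a t * legendreP b t * legendreP c t)
        = ((2 * real a + 1) * (t * legendreP a t)) * (legendreP b t * legendreP c t)"
      by (simp only: mult_ac)
    also have "\<dots> = ((real a + 1) * legendreP (Suc a) t + real a * legendreP (a - 1) t)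
        * (legendreP b t * legendreP c t)"
      by (simp only: x_times_legendreP)
    finally show ?thesis
      by (simp add: algebra_simps)
  qed
  then have "(2 * real a + 1) * integral {-1..1} (\<lambda>t. t * legendreP a t * legendreP b t * legendreP c t)
      = (real a + 1) * legendre_triple (Suc a) b c + real a * legendre_triple (a - 1) b c"
    unfolding legendre_triple_def integral_mult_right[symmetric]
    by (subst integral_add[symmetric]) (auto intro!: integrable_continuous_interval continuous_intros)
  then show ?thesis
    by (simp add: field_simps add_pos_pos)
qed

text \<open>
  The two sides come from expanding \<open>t P\<^sub>a\<close> resp. \<open>t P\<^sub>b\<close> in \<open>\<integral> t P\<^sub>a P\<^sub>b P\<^sub>c\<close>. The truncated
  \<open>a - 1\<close> at \<open>a = 0\<close> is harmless since its coefficient vanishes.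
\<close>

definition triple_recurrence :: "(nat \<Rightarrow> nat \<Rightarrow> real) \<Rightarrow> bool" where
  "triple_recurrence f \<longleftrightarrow> (\<forall>a b.
     ((real a + 1) * f (Suc a) b + real a * f (a - 1) b) / (2 * real a + 1)
       = ((real b + 1) * f a (Suc b) + real b * f a (b - 1)) / (2 * real b + 1))"

lemma triple_recurrence_legendre_triple: "triple_recurrence (\<lambda>a b. legendre_triple a b c)"
  unfolding triple_recurrence_def
proof (intro allI)
  fix a b
  have "integral {-1..1} (\<lambda>t. t * legendreP a t * legendreP b t * legendreP c t)
      = integral {-1..1} (\<lambda>t. t * legendreP b t * legendreP a t * legendreP c t)"
    by (simp add: ac_simps)
  then show "((real a + 1) * legendre_triple (Suc a) b c + real a * legendre_triple (a - 1) b c) / (2 * real a + 1)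
      = ((real b + 1) * legendre_triple a (Suc b) c + real b * legendre_triple a (b - 1) c) / (2 * real b + 1)"
    unfolding integral_x_legendre_triple by (simp add: legendre_triple_swap12[of _ a])
qed

lemma triple_recurrence_step:
  assumes "triple_recurrence f"
  shows "f (Suc a) b = ((2 * real a + 1) * (((real b + 1) * f a (Suc b) + real b * f a (b - 1)) / (2 * real b + 1))
           - real a * f (a - 1) b) / (real a + 1)"
proof -
  define R where "R = ((real b + 1) * f a (Suc b) + real b * f a (b - 1)) / (2 * real b + 1)"
  have "((real a + 1) * f (Suc a) b + real a * f (a - 1) b) / (2 * real a + 1) = R"
    using assms unfolding triple_recurrence_def R_def by blast
  then have "(real a + 1) * f (Suc a) b = (2 * real a + 1) * R - real a * f (a - 1) b"
    by (simp add: divide_eq_eq add_pos_pos algebra_simps)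
  then have "f (Suc a) b = ((2 * real a + 1) * R - real a * f (a - 1) b) / (real a + 1)"
    by (simp add: eq_divide_eq add_pos_pos mult.commute)
  then show ?thesis
    unfolding R_def .
qed

lemma triple_recurrence_unique:
  assumes f: "triple_recurrence f" and g: "triple_recurrence g" and row0: "\<And>b. f 0 b = g 0 b"
  shows "f a b = g a b"
proof -
  have "\<forall>b. f a b = g a b \<and> f (Suc a) b = g (Suc a) b"
  proof (induction a)
    case 0
    then show ?case
      by (simp add: triple_recurrence_step[OF f, of 0] triple_recurrence_step[OF g, of 0] row0)
  next
    case (Suc a)
    then show ?case
      by (simp add: triple_recurrence_step[OF f, of "Suc a"] triple_recurrence_step[OF g, of "Suc a"])
  qed
  then show ?thesis
    by blast
qed

definition adams_coeff :: "nat \<Rightarrow> real" where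
  "adams_coeff n = pochhammer (1 / 2) n / fact n"

lemma adams_coeff_0 [simp]: "adams_coeff 0 = 1"
  by (simp add: adams_coeff_def)

lemma adams_coeff_Suc: "adams_coeff (Suc n) = adams_coeff n * (2 * real n + 1) / (2 * real n + 2)"
  by (simp add: adams_coeff_def pochhammer_Suc field_simps)

lemma adams_coeff_pos: "adams_coeff n > 0"
  by (simp add: adams_coeff_def pochhammer_pos)

lemma adams_coeff_ratio_mono:
  assumes "m \<le> n"
  shows "adams_coeff (m + i) * adams_coeff n \<le> adams_coeff (n + i) * adams_coeff m"
proof (induction i)
  case (Suc i)
  have "(2 * real (m + i) + 1) / (2 * real (m + i) + 2) \<le> (2 * real (n + i) + 1) / (2 * real (n + i) + 2)"
    using assms by (simp add: field_simps)
  from mult_mono[OF Suc.IH this]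
  have "adams_coeff (m + i) * adams_coeff n * ((2 * real (m + i) + 1) / (2 * real (m + i) + 2))
      \<le> adams_coeff (n + i) * adams_coeff m * ((2 * real (n + i) + 1) / (2 * real (n + i) + 2))"
    by (simp add: adams_coeff_pos less_imp_le)
  then show ?case
    by (simp add: adams_coeff_Suc mult_ac)
qed simp

text \<open>
  Extension by zero: it makes \<open>gaunt\<close> vanish exactly when a triangle inequality fails, and
  keeps \<open>adams_coeff_int_pred\<close> valid at \<open>n = 0\<close>.
\<close>

definition adams_coeff_int :: "int \<Rightarrow> real" where
  "adams_coeff_int n = (if n < 0 then 0 else adams_coeff (nat n))"

lemma adams_coeff_int_pred:
  assumes "n \<ge> 0"
  shows "adams_coeff_int (n - 1) = adams_coeff_int n * (2 * of_int n / (2 * of_int n - 1))"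
proof (cases "n = 0")
  case False
  define m where "m = nat (n - 1)"
  have n: "n - 1 = int m" "nat n = Suc m" "real_of_int n = real m + 1"
    using assms False by (simp_all add: m_def)
  have "adams_coeff m = adams_coeff (Suc m) * (2 * real m + 2) / (2 * real m + 1)"
    by (simp add: adams_coeff_Suc add_pos_pos)
  with assms show ?thesis
    by (simp add: adams_coeff_int_def n algebra_simps)
qed (simp add: adams_coeff_int_def)

text \<open>Adams' formula in the excesses \<open>p = s - a\<close>, \<open>q = s - b\<close>, \<open>r = s - c\<close>.\<close>

definition gaunt :: "int \<Rightarrow> int \<Rightarrow> int \<Rightarrow> real" where
  "gaunt p q r = 2 / (2 * of_int (p + q + r) + 1)
     * adams_coeff_int p * adams_coeff_int q * adams_coeff_int r / adams_coeff_int (p + q + r)"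

lemma gaunt_of_nat:
  "gaunt (int p) (int q) (int r)
     = 2 / (2 * real (p + q + r) + 1) * adams_coeff p * adams_coeff q * adams_coeff r / adams_coeff (p + q + r)"
  by (simp add: gaunt_def adams_coeff_int_def nat_add_distrib)

lemma gaunt_eq_0: "p < 0 \<or> q < 0 \<or> r < 0 \<Longrightarrow> gaunt p q r = 0"
  by (auto simp: gaunt_def adams_coeff_int_def)

lemma gaunt_swap12: "gaunt p q r = gaunt q p r"
  by (simp add: gaunt_def ac_simps)

lemma gaunt_swap23: "gaunt p q r = gaunt p r q"
  by (simp add: gaunt_def ac_simps)

lemma of_int_double_minus_1_neq_0: "2 * real_of_int w - 1 \<noteq> 0"
proof
  assume "2 * real_of_int w - 1 = 0"
  then have "real_of_int (2 * w - 1) = 0"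
    by simp
  then show False
    by presburger
qed

lemma gaunt_pred_first:
  assumes "x \<ge> 0"
  shows "gaunt (x - 1) y z = 2 / (2 * of_int (x + y + z - 1) + 1) * (2 * of_int x / (2 * of_int x - 1))
           * (adams_coeff_int x * adams_coeff_int y * adams_coeff_int z / adams_coeff_int (x + y + z - 1))"
proof -
  have sum: "x - 1 + y + z = x + y + z - 1"
    by simp
  show ?thesis
    unfolding gaunt_def adams_coeff_int_pred[OF assms] sum by (simp add: mult_ac)
qed

lemma gaunt_pred_last_two:
  assumes "y \<ge> 0" "z \<ge> 0" "x + y + z \<ge> 2"
  shows "gaunt x (y - 1) (z - 1) = 1 / of_int (x + y + z - 1)
           * (2 * of_int y / (2 * of_int y - 1)) * (2 * of_int z / (2 * of_int z - 1))
           * (adams_coeff_int x * adams_coeff_int y * adams_coeff_int z / adams_coeff_int (x + y + z - 1))"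
proof -
  define t where "t = x + y + z - 1"
  have "t \<ge> 1" "t \<ge> 0"
    using assms by (simp_all add: t_def)
  have sum: "x + (y - 1) + (z - 1) = t - 1"
    by (simp add: t_def)
  have rearrange: "c * ax * (ay * u) * (az * v) / (a_t * w) = c / w * u * v * (ax * ay * az / a_t)"
    for c ax ay az a_t u v w :: real
    by (simp add: mult_ac)
  have ratio: "2 / (2 * real_of_int (t - 1) + 1) / (2 * of_int t / (2 * of_int t - 1)) = 1 / of_int t"
    using \<open>t \<ge> 1\<close> of_int_double_minus_1_neq_0[of t] by (simp add: field_simps)
  show ?thesis
    unfolding t_def[symmetric] gaunt_def sum adams_coeff_int_pred[OF assms(1)] adams_coeff_int_pred[OF assms(2)]
      adams_coeff_int_pred[OF \<open>t \<ge> 0\<close>] rearrange ratio ..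
qed

lemma gaunt_recurrence_rational_identity:
  fixes x y z :: int
  assumes "x + y + z \<ge> 2"
  defines "X \<equiv> real_of_int x" and "Y \<equiv> real_of_int y" and "Z \<equiv> real_of_int z"
    and "T \<equiv> real_of_int (x + y + z - 1)"
  shows "((Y + Z) * (2 / (2 * T + 1) * (2 * X / (2 * X - 1)))
           + (Y + Z - 1) * (1 / T * (2 * Y / (2 * Y - 1)) * (2 * Z / (2 * Z - 1)))) / (2 * (Y + Z) - 1)
       = 4 * ((4 * T + 1) * X * Y * Z - T * (X * Y + Y * Z + Z * X))
           / (T * (2 * T + 1) * (2 * X - 1) * (2 * Y - 1) * (2 * Z - 1))"
proof -
  have T: "T = X + Y + Z - 1"
    by (simp add: T_def X_def Y_def Z_def)
  have "T > 0"
    using assms by (simp add: T_def)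
  then have nz: "2 * X - 1 \<noteq> 0" "2 * Y - 1 \<noteq> 0" "2 * Z - 1 \<noteq> 0" "2 * T + 1 \<noteq> 0" "T \<noteq> 0"
    "2 * (Y + Z) - 1 \<noteq> 0"
    using of_int_double_minus_1_neq_0[of x] of_int_double_minus_1_neq_0[of y]
      of_int_double_minus_1_neq_0[of z] of_int_double_minus_1_neq_0[of "y + z"]
    by (simp_all add: X_def Y_def Z_def)
  \<comment> \<open>Naming the denominators keeps \<open>field_simps\<close> from multiplying them out.\<close>
  obtain dX dY dZ dT dYZ where d: "dX = 2 * X - 1" "dY = 2 * Y - 1" "dZ = 2 * Z - 1" "dT = 2 * T + 1"
    "dYZ = 2 * (Y + Z) - 1"
    by simp
  have num: "(Y + Z) * (4 * X) * T * dY * dZ + (Y + Z - 1) * (4 * Y * Z) * dT * dX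
      = 4 * ((4 * T + 1) * X * Y * Z - T * (X * Y + Y * Z + Z * X)) * dYZ"
    unfolding d T by (simp add: algebra_simps)
  have "((Y + Z) * (2 / dT * (2 * X / dX)) + (Y + Z - 1) * (1 / T * (2 * Y / dY) * (2 * Z / dZ))) / dYZ
      = ((Y + Z) * (4 * X) * T * dY * dZ + (Y + Z - 1) * (4 * Y * Z) * dT * dX) / (T * dT * dX * dY * dZ * dYZ)"
    using nz unfolding d[symmetric] by (simp add: field_simps)
  also have "\<dots> = 4 * ((4 * T + 1) * X * Y * Z - T * (X * Y + Y * Z + Z * X)) / (T * dT * dX * dY * dZ)"
    using nz unfolding num d[symmetric] by simp
  finally have "((Y + Z) * (2 / dT * (2 * X / dX)) + (Y + Z - 1) * (1 / T * (2 * Y / dY) * (2 * Z / dZ))) / dYZ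
      = 4 * ((4 * T + 1) * X * Y * Z - T * (X * Y + Y * Z + Z * X)) / (T * dT * dX * dY * dZ)" .
  then show ?thesis
    unfolding d .
qed

text \<open>The right-hand side is symmetric in \<open>x\<close> and \<open>y\<close>, which gives \<open>gaunt_recurrence\<close>.\<close>

lemma gaunt_recurrence_half:
  fixes x y z :: int
  assumes "x + y + z \<ge> 2"
  defines "X \<equiv> real_of_int x" and "Y \<equiv> real_of_int y" and "Z \<equiv> real_of_int z"
    and "T \<equiv> real_of_int (x + y + z - 1)"
  shows "(of_int (y + z) * gaunt (x - 1) y z + of_int (y + z - 1) * gaunt x (y - 1) (z - 1))
           / (2 * of_int (y + z) - 1)
       = 4 * adams_coeff_int x * adams_coeff_int y * adams_coeff_int z / adams_coeff_int (x + y + z - 1)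
           * ((4 * T + 1) * X * Y * Z - T * (X * Y + Y * Z + Z * X))
           / (T * (2 * T + 1) * (2 * X - 1) * (2 * Y - 1) * (2 * Z - 1))"
proof (cases "x < 0 \<or> y < 0 \<or> z < 0")
  case True
  then show ?thesis
    by (auto simp: gaunt_eq_0 adams_coeff_int_def)
next
  case False
  then have "x \<ge> 0" "y \<ge> 0" "z \<ge> 0"
    by simp_all
  define P where "P = adams_coeff_int x * adams_coeff_int y * adams_coeff_int z / adams_coeff_int (x + y + z - 1)"
  have G: "gaunt (x - 1) y z = 2 / (2 * T + 1) * (2 * X / (2 * X - 1)) * P"
    "gaunt x (y - 1) (z - 1) = 1 / T * (2 * Y / (2 * Y - 1)) * (2 * Z / (2 * Z - 1)) * P"
    unfolding X_def Y_def Z_def T_def P_def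
    by (rule gaunt_pred_first[OF \<open>x \<ge> 0\<close>], rule gaunt_pred_last_two[OF \<open>y \<ge> 0\<close> \<open>z \<ge> 0\<close> assms(1)])
  have coeffs: "real_of_int (y + z) = Y + Z" "real_of_int (y + z - 1) = Y + Z - 1"
    "2 * real_of_int (y + z) - 1 = 2 * (Y + Z) - 1"
    by (simp_all add: Y_def Z_def)
  have factor: "(a * (g1 * P) + b * (g2 * P)) / d = P * ((a * g1 + b * g2) / d)" for a b d g1 g2 :: real
    by (simp add: algebra_simps)
  have "(of_int (y + z) * gaunt (x - 1) y z + of_int (y + z - 1) * gaunt x (y - 1) (z - 1))
           / (2 * of_int (y + z) - 1)
      = P * (((Y + Z) * (2 / (2 * T + 1) * (2 * X / (2 * X - 1)))
           + (Y + Z - 1) * (1 / T * (2 * Y / (2 * Y - 1)) * (2 * Z / (2 * Z - 1)))) / (2 * (Y + Z) - 1))"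
    unfolding G coeffs factor ..
  also have "\<dots> = P * (4 * ((4 * T + 1) * X * Y * Z - T * (X * Y + Y * Z + Z * X))
           / (T * (2 * T + 1) * (2 * X - 1) * (2 * Y - 1) * (2 * Z - 1)))"
    using gaunt_recurrence_rational_identity[OF assms(1)] by (simp only: X_def Y_def Z_def T_def)
  finally show ?thesis
    by (simp add: P_def)
qed

lemma gaunt_recurrence:
  fixes x y z :: int
  assumes "x + y + z \<ge> 2"
  shows "(of_int (y + z) * gaunt (x - 1) y z + of_int (y + z - 1) * gaunt x (y - 1) (z - 1))
           / (2 * of_int (y + z) - 1)
       = (of_int (x + z) * gaunt x (y - 1) z + of_int (x + z - 1) * gaunt (x - 1) y (z - 1))
           / (2 * of_int (x + z) - 1)"
  using gaunt_recurrence_half[of x y z] gaunt_recurrence_half[of y x z] assms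
  by (simp add: gaunt_swap12[of "y - 1"] gaunt_swap12[of y] ac_simps)

definition adams_triple :: "nat \<Rightarrow> nat \<Rightarrow> nat \<Rightarrow> real" where
  "adams_triple a b c =
     (let s = int ((a + b + c) div 2)
      in if even (a + b + c) then gaunt (s - int a) (s - int b) (s - int c) else 0)"

lemma adams_triple_even:
  "a + b + c = 2 * s \<Longrightarrow> adams_triple a b c = gaunt (int s - int a) (int s - int b) (int s - int c)"
  by (simp add: adams_triple_def Let_def)

lemma adams_triple_odd: "odd (a + b + c) \<Longrightarrow> adams_triple a b c = 0"
  by (simp add: adams_triple_def)

lemma adams_triple_swap12: "adams_triple a b c = adams_triple b a c"
proof -
  have sum: "b + a + c = a + b + c"
    by simp
  show ?thesis
    unfolding adams_triple_def Let_def sum by (simp add: gaunt_swap12)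
qed

lemma adams_triple_swap23: "adams_triple a b c = adams_triple a c b"
proof -
  have sum: "a + c + b = a + b + c"
    by simp
  show ?thesis
    unfolding adams_triple_def Let_def sum by (simp add: gaunt_swap23)
qed

lemma adams_triple_recurrence_odd:
  assumes k: "a + b + c = 2 * k + 1"
  shows "((real a + 1) * adams_triple (Suc a) b c + real a * adams_triple (a - 1) b c) / (2 * real a + 1)
       = ((real b + 1) * adams_triple a (Suc b) c + real b * adams_triple a (b - 1) c) / (2 * real b + 1)"
proof -
  define x y z where "x = int k + 1 - int a" and "y = int k + 1 - int b" and "z = int k + 1 - int c"
  have up: "adams_triple (Suc a) b c = gaunt (x - 1) y z" "adams_triple a (Suc b) c = gaunt x (y - 1) z"
    using k by (simp_all add: adams_triple_even[of _ _ _ "Suc k"] x_def y_def z_def add.commute)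
  have down_a: "real a * adams_triple (a - 1) b c = of_int (y + z - 1) * gaunt x (y - 1) (z - 1)"
  proof (cases a)
    case (Suc a')
    with k have "adams_triple (a - 1) b c = gaunt x (y - 1) (z - 1)"
      by (simp add: adams_triple_even[of _ _ _ k] x_def y_def z_def)
    with k show ?thesis
      by (simp add: y_def z_def)
  qed (use k in \<open>simp add: y_def z_def\<close>)
  have down_b: "real b * adams_triple a (b - 1) c = of_int (x + z - 1) * gaunt (x - 1) y (z - 1)"
  proof (cases b)
    case (Suc b')
    with k have "adams_triple a (b - 1) c = gaunt (x - 1) y (z - 1)"
      by (simp add: adams_triple_even[of _ _ _ k] x_def y_def z_def)
    with k show ?thesis
      by (simp add: x_def z_def)
  qed (use k in \<open>simp add: x_def z_def\<close>)
  have coeffs: "real a + 1 = of_int (y + z)" "2 * real a + 1 = 2 * of_int (y + z) - 1"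
    "real b + 1 = of_int (x + z)" "2 * real b + 1 = 2 * of_int (x + z) - 1"
    using k by (simp_all add: x_def y_def z_def)
  have "x + y + z \<ge> 2"
    using k by (simp add: x_def y_def z_def)
  then show ?thesis
    unfolding up down_a down_b coeffs by (rule gaunt_recurrence)
qed

lemma triple_recurrence_adams_triple: "triple_recurrence (\<lambda>a b. adams_triple a b c)"
  unfolding triple_recurrence_def
proof (intro allI)
  fix a b
  show "((real a + 1) * adams_triple (Suc a) b c + real a * adams_triple (a - 1) b c) / (2 * real a + 1)
      = ((real b + 1) * adams_triple a (Suc b) c + real b * adams_triple a (b - 1) c) / (2 * real b + 1)"
  proof (cases "even (a + b + c)")
    case True
    then have "real a * adams_triple (a - 1) b c = 0" "real b * adams_triple a (b - 1) c = 0"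
      by (cases a; cases b; simp add: adams_triple_odd)+
    with True show ?thesis
      by (simp only:) (simp add: adams_triple_odd)
  next
    case False
    then obtain k where "a + b + c = 2 * k + 1"
      by (metis oddE)
    then show ?thesis
      by (rule adams_triple_recurrence_odd)
  qed
qed

lemma adams_triple_0_b_0: "adams_triple 0 b 0 = (if b = 0 then 2 else 0)"
proof (cases "even b")
  case True
  then obtain s where "b = 2 * s"
    by blast
  then show ?thesis
    by (simp add: adams_triple_even[of _ _ _ s] gaunt_eq_0 gaunt_def adams_coeff_int_def)
qed (auto simp: adams_triple_odd odd_pos)

lemma legendre_triple_0_b_0: "legendre_triple 0 b 0 = (if b = 0 then 2 else 0)"
  using integral_legendreP[of b] by (simp add: legendre_triple_def)

lemma legendre_triple_eq_adams_triple: "legendre_triple a b c = adams_triple a b c"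
proof -
  \<comment> \<open>By symmetry, the row \<open>a = 0\<close> of the slice \<open>c\<close> is the row \<open>c = 0\<close> of the slice \<open>0\<close>.\<close>
  have slice0: "legendre_triple a b 0 = adams_triple a b 0" for a b
    using triple_recurrence_unique[OF triple_recurrence_legendre_triple[of 0] triple_recurrence_adams_triple[of 0]]
    by (simp add: legendre_triple_0_b_0 adams_triple_0_b_0)
  have "legendre_triple 0 b c = adams_triple 0 b c" for b
    using slice0[of b c] legendre_triple_swap12 legendre_triple_swap23 adams_triple_swap12 adams_triple_swap23
    by metis
  then show ?thesis
    using triple_recurrence_unique[OF triple_recurrence_legendre_triple[of c] triple_recurrence_adams_triple[of c]]
    by simp
qed

lemma gaunt_of_nat_pos: "gaunt (int p) (int q) (int r) > 0"
  by (simp add: gaunt_of_nat adams_coeff_pos add_pos_pos)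

lemma gaunt_of_nat_strict_decreasing:
  assumes "i > 0"
  shows "gaunt (int (p + i)) (int q) (int r) < gaunt (int p) (int q) (int r)"
proof -
  define s where "s = p + q + r"
  define C where "C = 2 * adams_coeff q * adams_coeff r"
  have ratio: "adams_coeff (p + i) * adams_coeff s \<le> adams_coeff (s + i) * adams_coeff p"
    by (rule adams_coeff_ratio_mono) (simp add: s_def)
  have "2 * real s + 1 < 2 * real (s + i) + 1"
    using assms by simp
  from mult_le_less_imp_less[OF ratio this]
  have "adams_coeff (p + i) * adams_coeff s * (2 * real s + 1)
      < adams_coeff (s + i) * adams_coeff p * (2 * real (s + i) + 1)"
    by (simp add: adams_coeff_pos)
  then have less: "adams_coeff (p + i) / ((2 * real (s + i) + 1) * adams_coeff (s + i))
      < adams_coeff p / ((2 * real s + 1) * adams_coeff s)"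
    by (simp add: divide_less_eq less_divide_eq adams_coeff_pos add_pos_pos mult_ac)
  have sum: "p + i + q + r = s + i"
    by (simp add: s_def)
  have "gaunt (int (p + i)) (int q) (int r)
      = C * (adams_coeff (p + i) / ((2 * real (s + i) + 1) * adams_coeff (s + i)))"
    unfolding gaunt_of_nat sum by (simp add: C_def)
  also have "\<dots> < C * (adams_coeff p / ((2 * real s + 1) * adams_coeff s))"
    using less by (rule mult_strict_left_mono) (simp add: C_def adams_coeff_pos)
  also have "\<dots> = gaunt (int p) (int q) (int r)"
    unfolding gaunt_of_nat s_def by (simp add: C_def)
  finally show ?thesis .
qed

theorem lemmaA2:
  fixes d k i :: nat
  assumes "k \<le> d" and "1 \<le> i"
  shows "legendre_triple d k (d - k) > legendre_triple d (k + i) (d - k + i)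
       \<and> legendre_triple d (k + i) (d - k + i) > 0"
proof -
  have "legendre_triple d k (d - k) = gaunt (int 0) (int (d - k)) (int k)"
    using assms by (simp add: legendre_triple_eq_adams_triple adams_triple_even[of _ _ _ d])
  moreover have "legendre_triple d (k + i) (d - k + i) = gaunt (int (0 + i)) (int (d - k)) (int k)"
    using assms by (simp add: legendre_triple_eq_adams_triple adams_triple_even[of _ _ _ "d + i"])
  ultimately show ?thesis
    using assms gaunt_of_nat_strict_decreasing[of i 0 "d - k" k] gaunt_of_nat_pos[of i "d - k" k] by simp
qed

end
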